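(* Let $a>0$, $\alpha\in[0,1)$ and $f\in\mathcal C_a$. The function $\mathrm{Sh}_\alpha(f)$ is differentiable on $(-\infty,s_\alpha)$ and $\mathrm{Sh}_\alpha(f)'(x)<\alpha$ for every $x\in(-\infty,s_\alpha)$.
   Context: $\mathcal C_a$ is the set of $C^1$ functions $f:\mathbb R\to\mathbb R$ that are even, satisfy $f(s)=|s|$ for $|s|\ge a$ and are strictly convex on $[-a,a]$. For $f\in\mathcal C_a$: $F_\alpha(s)=f(s)-\alpha s$, $x_\alpha^+=(f')^{-1}(\alpha)\in[0,a)$ (inverse of $f':[-a,a]\to[-1,1]$); $F_\alpha$ decreases on $(-\infty,x_\alpha^+]$ and increases on $[x_\alpha^+,\infty)$. Let $F_\alpha^{-1}$ be the inverse of $F_\alpha|_{[x_\alpha^+,\infty)}$, $\phi=F_\alpha^{-1}\circ F_\alpha$, $\delta_x=(1-\alpha)^{-1}F_\alpha(x)-\phi(x)$, $s_\alpha=x_\alpha^++\delta_{x_\alpha^+}$; $x\mapsto x+\delta_x$ is an increasing bijection $(-\infty,x_\alpha^+]\to(-\infty,s_\alpha]$ with inverse $\tau$. Define $\mathrm{Sh}_\alpha(f)(x)=\alpha x+F_\alpha(\tau(x))$ for $x\le s_\alpha$ and $=x$ for $x>s_\alpha$. *)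

theory Defs
  imports "HOL-Analysis.Analysis"
begin

definition strictly_convex_on :: "real set \<Rightarrow> (real \<Rightarrow> real) \<Rightarrow> bool" where
  "strictly_convex_on S f \<longleftrightarrow> convex S \<and>
    (\<forall>x\<in>S. \<forall>y\<in>S. \<forall>t. x \<noteq> y \<longrightarrow> 0 < t \<longrightarrow> t < 1 \<longrightarrow>
       f ((1 - t) * x + t * y) < (1 - t) * f x + t * f y)"

definition Ca :: "real \<Rightarrow> (real \<Rightarrow> real) set" where
  "Ca a = {f. (\<forall>x. f differentiable (at x)) \<and> continuous_on UNIV (deriv f)
              \<and> (\<forall>s. f (- s) = f s)
              \<and> (\<forall>s. \<bar>s\<bar> \<ge> a \<longrightarrow> f s = \<bar>s\<bar>)
              \<and> strictly_convex_on {-a..a} f}"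

definition Falpha :: "(real \<Rightarrow> real) \<Rightarrow> real \<Rightarrow> real \<Rightarrow> real" where
  "Falpha f \<alpha> s = f s - \<alpha> * s"

definition xplus :: "real \<Rightarrow> (real \<Rightarrow> real) \<Rightarrow> real \<Rightarrow> real" where
  "xplus a f \<alpha> = (THE x. x \<in> {-a..a} \<and> deriv f x = \<alpha>)"

definition Finv :: "real \<Rightarrow> (real \<Rightarrow> real) \<Rightarrow> real \<Rightarrow> real \<Rightarrow> real" where
  "Finv a f \<alpha> y = (THE z. z \<ge> xplus a f \<alpha> \<and> Falpha f \<alpha> z = y)"

definition phi :: "real \<Rightarrow> (real \<Rightarrow> real) \<Rightarrow> real \<Rightarrow> real \<Rightarrow> real" where
  "phi a f \<alpha> x = Finv a f \<alpha> (Falpha f \<alpha> x)"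

definition delta :: "real \<Rightarrow> (real \<Rightarrow> real) \<Rightarrow> real \<Rightarrow> real \<Rightarrow> real" where
  "delta a f \<alpha> x = Falpha f \<alpha> x / (1 - \<alpha>) - phi a f \<alpha> x"

definition salpha :: "real \<Rightarrow> (real \<Rightarrow> real) \<Rightarrow> real \<Rightarrow> real" where
  "salpha a f \<alpha> = xplus a f \<alpha> + delta a f \<alpha> (xplus a f \<alpha>)"

definition tau :: "real \<Rightarrow> (real \<Rightarrow> real) \<Rightarrow> real \<Rightarrow> real \<Rightarrow> real" where
  "tau a f \<alpha> y = (THE x. x \<le> xplus a f \<alpha> \<and> x + delta a f \<alpha> x = y)"

definition Sh :: "real \<Rightarrow> real \<Rightarrow> (real \<Rightarrow> real) \<Rightarrow> real \<Rightarrow> real" where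
  "Sh a \<alpha> f x = (if x \<le> salpha a f \<alpha> then \<alpha> * x + Falpha f \<alpha> (tau a f \<alpha> x) else x)"

end

theory Submission
  imports Defs
begin

(* On (-inf, s_alpha) we have Sh_alpha(f) x = alpha x + F_alpha(tau x), where tau inverts
   g t = t + delta_t on (-inf, x_alpha^+).  By the inverse function rule phi' t = F_alpha' t / F_alpha' (phi t),
   so g' t = 1 + F_alpha' t / (1 - alpha) - F_alpha' t / F_alpha' (phi t) >= 1, since
   F_alpha' t < 0 < F_alpha' (phi t) <= 1 - alpha.  Hence Sh_alpha(f)' x = alpha + F_alpha' (tau x) / g' (tau x) < alpha.
   That g maps (-inf, x_alpha^+] onto (-inf, s_alpha] needs continuity of phi up to x_alpha^+, which
   comes from the continuity of the inverse of F_alpha on compact intervals. *)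

lemma convex_on_deriv_le_slope:
  fixes f :: "real \<Rightarrow> real"
  assumes convex: "convex_on {c..x} f" and "c < x"
    and deriv: "(f has_real_derivative D) (at c)"
  shows "D \<le> (f x - f c) / (x - c)"
proof -
  have "((\<lambda>y. (f y - f c) / (y - c)) \<longlongrightarrow> D) (at_right c)"
    using deriv unfolding has_field_derivative_iff by (blast intro: tendsto_mono at_le)
  moreover have "eventually (\<lambda>y. (f y - f c) / (y - c) \<le> (f x - f c) / (x - c)) (at_right c)"
    using eventually_at_right_real[OF \<open>c < x\<close>]
  proof eventually_elim
    case (elim y)
    then have "f y \<le> (f x - f c) / (x - c) * (y - c) + f c"
      using convex_onD_Icc'[OF convex, of y] by auto
    with elim show ?case by (simp add: field_split_simps)
  qed
  ultimately show ?thesis by (simp add: tendsto_upperbound)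
qed

lemma convex_on_slope_le_deriv:
  fixes f :: "real \<Rightarrow> real"
  assumes convex: "convex_on {x..c} f" and "x < c"
    and deriv: "(f has_real_derivative D) (at c)"
  shows "(f c - f x) / (c - x) \<le> D"
proof -
  have "((\<lambda>y. (f y - f c) / (y - c)) \<longlongrightarrow> D) (at_left c)"
    using deriv unfolding has_field_derivative_iff by (blast intro: tendsto_mono at_le)
  moreover have "eventually (\<lambda>y. (f c - f x) / (c - x) \<le> (f y - f c) / (y - c)) (at_left c)"
    using eventually_at_left_real[OF \<open>x < c\<close>]
  proof eventually_elim
    case (elim y)
    then have "f y \<le> (f x - f c) / (c - x) * (c - y) + f c"
      using convex_onD_Icc''[OF convex, of y] by auto
    with elim show ?case by (simp add: field_split_simps)
  qed
  ultimately show ?thesis by (simp add: tendsto_lowerbound)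
qed

lemma strictly_convex_on_imp_convex_on:
  fixes f :: "real \<Rightarrow> real"
  assumes "strictly_convex_on S f"
  shows "convex_on S f"
proof
  show "convex S" using assms unfolding strictly_convex_on_def by simp
  fix t x y :: real assume "0 < t" "t < 1" "x \<in> S" "y \<in> S"
  with assms show "f ((1 - t) *\<^sub>R x + t *\<^sub>R y) \<le> (1 - t) * f x + t * f y"
    unfolding strictly_convex_on_def by (cases "x = y") (auto simp flip: distrib_right intro!: less_imp_le)
qed

lemma strictly_convex_on_deriv_less:
  fixes f :: "real \<Rightarrow> real"
  assumes strict: "strictly_convex_on {l..u} f" and "l \<le> x" "x < y" "y \<le> u"
    and Dx: "(f has_real_derivative Dx) (at x)" and Dy: "(f has_real_derivative Dy) (at y)"
  shows "Dx < Dy"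
proof -
  define m where "m = (x + y) / 2"
  have m: "x < m" "m < y" "m - x = y - m" using \<open>x < y\<close> by (auto simp: m_def field_simps)
  have convex: "convex_on {l..u} f" using strict by (rule strictly_convex_on_imp_convex_on)
  have "Dx \<le> (f m - f x) / (m - x)"
    using convex_on_deriv_le_slope[OF convex_on_subset[OF convex] m(1) Dx] m assms by auto
  also have "\<dots> < (f y - f m) / (y - m)"
  proof -
    have "\<forall>t. 0 < t \<longrightarrow> t < 1 \<longrightarrow> f ((1 - t) * x + t * y) < (1 - t) * f x + t * f y"
      using strict assms unfolding strictly_convex_on_def by auto
    from this[rule_format, of "1/2"] have "f m - f x < f y - f m"
      by (simp add: m_def add_divide_distrib)
    then have "(f m - f x) / (m - x) < (f y - f m) / (m - x)"
      using m by (simp add: divide_strict_right_mono)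
    then show ?thesis unfolding m(3) .
  qed
  also have "\<dots> \<le> Dy"
    using convex_on_slope_le_deriv[OF convex_on_subset[OF convex] m(2) Dy] m assms by auto
  finally show ?thesis .
qed

lemma has_real_derivative_inverse_strong:
  fixes f g :: "real \<Rightarrow> real"
  assumes "open S" "x \<in> S" "continuous_on S f" "\<And>z. z \<in> S \<Longrightarrow> g (f z) = z"
    and "(f has_real_derivative D) (at x)" "D \<noteq> 0"
  shows "(g has_real_derivative inverse D) (at (f x))"
  using has_derivative_inverse_strong[OF assms(1-4), of "(*) D" "(*) (inverse D)"] assms(5,6)
  by (simp add: has_field_derivative_def o_def fun_eq_iff)

locale Ca_function =
  fixes a :: real and f :: "real \<Rightarrow> real"
  assumes a_pos: "0 < a" and f_in_Ca: "f \<in> Ca a"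
begin

lemma has_real_derivative_deriv: "(f has_real_derivative deriv f x) (at x)"
  using f_in_Ca unfolding Ca_def by (simp add: DERIV_deriv_iff_real_differentiable)

lemma continuous_on_deriv: "continuous_on S (deriv f)"
  using f_in_Ca unfolding Ca_def by (blast intro: continuous_on_subset)

lemma f_eq_abs: "a \<le> \<bar>s\<bar> \<Longrightarrow> f s = \<bar>s\<bar>"
  using f_in_Ca unfolding Ca_def by auto

lemma strictly_convex: "strictly_convex_on {-a..a} f"
  using f_in_Ca unfolding Ca_def by auto

lemma deriv_eq_1: "a < s \<Longrightarrow> deriv f s = 1"
proof -
  assume s: "a < s"
  have "(f has_real_derivative 1) (at s)"
    by (rule has_field_derivative_transform_within_open[OF DERIV_ident, of "{a<..}"])
       (use s a_pos f_eq_abs in auto)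
  then show ?thesis using has_real_derivative_deriv DERIV_unique by blast
qed

lemma deriv_eq_minus_1: "s < -a \<Longrightarrow> deriv f s = -1"
proof -
  assume s: "s < -a"
  have "(f has_real_derivative -1) (at s)"
    by (rule has_field_derivative_transform_within_open[OF DERIV_minus[OF DERIV_ident], of "{..< -a}"])
       (use s a_pos f_eq_abs in auto)
  then show ?thesis using has_real_derivative_deriv DERIV_unique by blast
qed

lemma deriv_at_a: "deriv f a = 1"
  by (rule continuous_constant_on_closure[of "{a<..}"]) (auto simp: continuous_on_deriv deriv_eq_1)

lemma deriv_at_minus_a: "deriv f (-a) = -1"
  by (rule continuous_constant_on_closure[of "{..< -a}"])
     (auto simp: continuous_on_deriv deriv_eq_minus_1)

lemma deriv_strict_mono: "-a \<le> x \<Longrightarrow> x < y \<Longrightarrow> y \<le> a \<Longrightarrow> deriv f x < deriv f y"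
  by (rule strictly_convex_on_deriv_less[OF strictly_convex _ _ _ has_real_derivative_deriv
        has_real_derivative_deriv])

lemma deriv_le_1: "deriv f t \<le> 1"
  using deriv_eq_minus_1[of t] deriv_eq_1[of t] deriv_strict_mono[of t a] deriv_at_a
  by (cases "t < -a"; cases "t < a"; cases "t = a") auto

end

locale Ca_tilt = Ca_function +
  fixes \<alpha> :: real
  assumes alpha_nonneg: "0 \<le> \<alpha>" and alpha_less_1: "\<alpha> < 1"
begin

abbreviation "xp \<equiv> xplus a f \<alpha>"
abbreviation "F \<equiv> Falpha f \<alpha>"
abbreviation "F_inv \<equiv> Finv a f \<alpha>"
abbreviation "\<phi> \<equiv> phi a f \<alpha>"
abbreviation "\<tau> \<equiv> tau a f \<alpha>"

lemma ex1_deriv_eq_alpha: "\<exists>!x. x \<in> {-a..a} \<and> deriv f x = \<alpha>"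
proof (rule ex_ex1I)
  have "\<exists>x\<ge>-a. x \<le> a \<and> deriv f x = \<alpha>"
    by (rule IVT') (use deriv_at_a deriv_at_minus_a alpha_nonneg alpha_less_1 a_pos
        continuous_on_deriv in auto)
  then show "\<exists>x. x \<in> {-a..a} \<and> deriv f x = \<alpha>" by auto
  show "x = y" if "x \<in> {-a..a} \<and> deriv f x = \<alpha>" "y \<in> {-a..a} \<and> deriv f y = \<alpha>" for x y
    using deriv_strict_mono[of x y] deriv_strict_mono[of y x] that
    by (cases x y rule: linorder_cases) auto
qed

lemma xplus: shows xplus_mem: "xp \<in> {-a..a}" and deriv_xplus: "deriv f xp = \<alpha>"
  using theI'[OF ex1_deriv_eq_alpha] unfolding xplus_def by auto

lemma xplus_less_a: "xp < a"
  using xplus deriv_at_a alpha_less_1 by (metis atLeastAtMost_iff order_less_le)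

lemma deriv_less_alpha: "t < xp \<Longrightarrow> deriv f t < \<alpha>"
  using deriv_strict_mono[of t xp] xplus deriv_eq_minus_1[of t] alpha_nonneg
  by (cases "t < -a") auto

lemma deriv_greater_alpha: "xp < t \<Longrightarrow> \<alpha> < deriv f t"
  using deriv_strict_mono[of xp t] xplus deriv_eq_1[of t] alpha_less_1
  by (cases "a < t") auto

lemma F_has_derivative: "(F has_real_derivative deriv f s - \<alpha>) (at s)"
  unfolding Falpha_def[abs_def] by (rule derivative_eq_intros has_real_derivative_deriv refl)+ simp

lemma isCont_F: "isCont F s"
  using F_has_derivative by (rule DERIV_isCont)

lemma continuous_on_F: "continuous_on S F"
  by (simp add: continuous_at_imp_continuous_on isCont_F)

lemma F_strict_decreasing: "u < v \<Longrightarrow> v \<le> xp \<Longrightarrow> F v < F u"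
  by (rule DERIV_neg_imp_decreasing_open)
     (use F_has_derivative deriv_less_alpha continuous_on_F in \<open>force+\<close>)

lemma F_strict_increasing: "xp \<le> u \<Longrightarrow> u < v \<Longrightarrow> F u < F v"
  by (rule DERIV_pos_imp_increasing_open)
     (use F_has_derivative deriv_greater_alpha continuous_on_F in \<open>force+\<close>)

lemma F_le_iff_left: "u \<le> xp \<Longrightarrow> v \<le> xp \<Longrightarrow> F u \<le> F v \<longleftrightarrow> v \<le> u"
  using F_strict_decreasing[of u v] F_strict_decreasing[of v u] by (cases u v rule: linorder_cases) auto

lemma F_le_iff_right: "xp \<le> u \<Longrightarrow> xp \<le> v \<Longrightarrow> F u \<le> F v \<longleftrightarrow> u \<le> v"
  using F_strict_increasing[of u v] F_strict_increasing[of v u] by (cases u v rule: linorder_cases) auto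

lemma F_inj_right: "xp \<le> u \<Longrightarrow> xp \<le> v \<Longrightarrow> F u = F v \<Longrightarrow> u = v"
  using F_le_iff_right[of u v] F_le_iff_right[of v u] by auto

lemma F_xplus_le: "F xp \<le> F t"
  using F_le_iff_left[of t xp] F_le_iff_right[of xp t] by (cases "t \<le> xp") auto

lemma F_eq_right: "a \<le> s \<Longrightarrow> F s = (1 - \<alpha>) * s"
  using f_eq_abs[of s] a_pos by (simp add: Falpha_def algebra_simps)

lemma F_eq_left: "s \<le> -a \<Longrightarrow> F s = (1 + \<alpha>) * - s"
  using f_eq_abs[of s] a_pos by (simp add: Falpha_def algebra_simps)

lemma ex1_F_inv:
  assumes "F xp \<le> y" shows "\<exists>!z. xp \<le> z \<and> F z = y"
proof (rule ex_ex1I)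
  define b where "b = max a (y / (1 - \<alpha>))"
  have "xp \<le> b" using xplus_less_a by (simp add: b_def)
  have "y / (1 - \<alpha>) \<le> b" by (simp add: b_def)
  then have "y \<le> (1 - \<alpha>) * b" using alpha_less_1 by (simp add: field_simps)
  also have "\<dots> = F b" by (simp add: F_eq_right b_def)
  finally show "\<exists>z. xp \<le> z \<and> F z = y"
    using IVT[of F xp y b] assms \<open>xp \<le> b\<close> isCont_F by blast
qed (auto intro: F_inj_right)

lemma F_inv:
  assumes "F xp \<le> y"
  shows xplus_le_F_inv: "xp \<le> F_inv y" and F_F_inv: "F (F_inv y) = y"
  using theI'[OF ex1_F_inv[OF assms]] unfolding Finv_def by auto

lemma F_inv_F: "xp \<le> z \<Longrightarrow> F_inv (F z) = z"
  using F_inv[OF F_xplus_le, of z] by (auto intro: F_inj_right)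

lemma phi: shows xplus_le_phi: "xp \<le> \<phi> t" and F_phi: "F (\<phi> t) = F t"
  using F_inv[OF F_xplus_le] unfolding phi_def by auto

lemma phi_greater: "t < xp \<Longrightarrow> xp < \<phi> t"
  using phi[of t] F_strict_decreasing[of t xp] by (cases "\<phi> t = xp") auto

lemma phi_antimono: "t \<le> t' \<Longrightarrow> t' \<le> xp \<Longrightarrow> \<phi> t' \<le> \<phi> t"
  using F_le_iff_left[of t' t] F_le_iff_right[of "\<phi> t'" "\<phi> t"] phi by auto

lemma phi_eq_left: "t \<le> -a \<Longrightarrow> \<phi> t = F t / (1 - \<alpha>)"
proof -
  assume t: "t \<le> -a"
  have "(1 - \<alpha>) * a \<le> (1 + \<alpha>) * - t"
    using t alpha_nonneg alpha_less_1 a_pos by (intro mult_mono) auto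
  then have "a \<le> F t / (1 - \<alpha>)"
    using alpha_less_1 by (simp add: F_eq_left[OF t] field_simps)
  then have "F_inv (F (F t / (1 - \<alpha>))) = F t / (1 - \<alpha>)"
    using xplus_less_a by (intro F_inv_F) auto
  then show ?thesis
    using \<open>a \<le> F t / (1 - \<alpha>)\<close> alpha_less_1 by (simp add: phi_def F_eq_right)
qed

lemma continuous_on_phi: "continuous_on {m..xp} \<phi>"
proof -
  have image: "F ` {m..xp} \<subseteq> F ` {xp..\<phi> m}"
  proof
    fix y assume "y \<in> F ` {m..xp}"
    then obtain t where t: "t \<in> {m..xp}" "y = F t" by auto
    then have "\<phi> t \<in> {xp..\<phi> m}" using phi phi_antimono by auto
    then show "y \<in> F ` {xp..\<phi> m}" using t phi by (metis image_eqI)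
  qed
  have "continuous_on (F ` {xp..\<phi> m}) F_inv"
    by (rule continuous_on_inv) (auto simp: continuous_on_F F_inv_F)
  then have "continuous_on {m..xp} (F_inv \<circ> F)"
    by (intro continuous_on_compose continuous_on_F) (rule continuous_on_subset[OF _ image])
  then show ?thesis by (simp add: phi_def[abs_def] o_def)
qed

lemma phi_has_derivative:
  assumes "t < xp"
  shows "(\<phi> has_real_derivative (deriv f t - \<alpha>) / (deriv f (\<phi> t) - \<alpha>)) (at t)"
proof -
  have "(F_inv has_real_derivative inverse (deriv f (\<phi> t) - \<alpha>)) (at (F (\<phi> t)))"
    using phi_greater[OF assms] deriv_greater_alpha[OF phi_greater[OF assms]]
    by (intro has_real_derivative_inverse_strong[of "{xp<..}"] F_has_derivative)
       (auto simp: continuous_on_F F_inv_F)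
  then have "((F_inv \<circ> F) has_real_derivative inverse (deriv f (\<phi> t) - \<alpha>) * (deriv f t - \<alpha>)) (at t)"
    using F_phi by (intro DERIV_chain F_has_derivative) auto
  then show ?thesis by (simp add: phi_def[abs_def] o_def field_simps)
qed

definition shift :: "real \<Rightarrow> real" where
  "shift t = t + delta a f \<alpha> t"

lemma shift_eq: "shift t = t + F t / (1 - \<alpha>) - \<phi> t"
  by (simp add: shift_def delta_def)

lemma shift_eq_left: "t \<le> -a \<Longrightarrow> shift t = t"
  by (simp add: shift_eq phi_eq_left)

lemma salpha_eq_shift: "salpha a f \<alpha> = shift xp"
  by (simp add: salpha_def shift_def)

lemma shift_has_derivative_ge_1:
  assumes "t < xp"
  shows "\<exists>D\<ge>1. (shift has_real_derivative D) (at t)"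
proof -
  define p where "p = deriv f t - \<alpha>"
  define q where "q = deriv f (\<phi> t) - \<alpha>"
  have p: "p < 0" using deriv_less_alpha[OF assms] by (simp add: p_def)
  have q: "0 < q" "q \<le> 1 - \<alpha>"
    using deriv_greater_alpha[OF phi_greater[OF assms]] deriv_le_1[of "\<phi> t"] by (auto simp: q_def)
  have "(shift has_real_derivative 1 + p / (1 - \<alpha>) - p / q) (at t)"
    unfolding shift_eq[abs_def] p_def q_def
    by (intro DERIV_diff DERIV_add DERIV_ident DERIV_cdivide F_has_derivative phi_has_derivative assms)
  moreover have "0 \<le> p * (1 / (1 - \<alpha>) - 1 / q)"
    using p q by (intro mult_nonpos_nonpos) (auto intro: divide_left_mono)
  ultimately show ?thesis by (intro exI[of _ "1 + p / (1 - \<alpha>) - p / q"]) (auto simp: algebra_simps)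
qed

lemma continuous_on_shift: "continuous_on {m..xp} shift"
  unfolding shift_eq[abs_def] using alpha_less_1
  by (intro continuous_intros continuous_on_F continuous_on_phi) auto

lemma shift_strict_mono:
  assumes "u < v" "v \<le> xp"
  shows "shift u < shift v"
proof (rule DERIV_pos_imp_increasing_open[OF assms(1)])
  fix t assume "u < t" "t < v"
  then obtain D where "1 \<le> D" "(shift has_real_derivative D) (at t)"
    using shift_has_derivative_ge_1[of t] assms by auto
  then show "\<exists>D. (shift has_real_derivative D) (at t) \<and> 0 < D" by auto
next
  show "continuous_on {u..v} shift"
    using assms by (intro continuous_on_subset[OF continuous_on_shift[of u]]) auto
qed

lemma shift_inj: "u \<le> xp \<Longrightarrow> v \<le> xp \<Longrightarrow> shift u = shift v \<Longrightarrow> u = v"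
  using shift_strict_mono[of u v] shift_strict_mono[of v u] by (cases u v rule: linorder_cases) auto

lemma tau_shift: "t \<le> xp \<Longrightarrow> \<tau> (shift t) = t"
  unfolding tau_def shift_def[symmetric] by (rule the_equality) (use shift_inj in auto)

lemma tau:
  assumes "y < salpha a f \<alpha>"
  shows tau_less_xplus: "\<tau> y < xp" and shift_tau: "shift (\<tau> y) = y"
proof -
  define m where "m = min y (-a)"
  have "m \<le> xp" "shift m = m" using xplus by (auto simp: m_def shift_eq_left)
  then obtain t where "t \<le> xp" "shift t = y"
    using IVT'[of shift m y xp] assms continuous_on_shift
    by (auto simp: salpha_eq_shift m_def)
  then show "\<tau> y < xp" "shift (\<tau> y) = y"
    using tau_shift assms by (auto simp: salpha_eq_shift order_le_less)
qed

lemma Sh_has_derivative_less_alpha: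
  assumes "y < salpha a f \<alpha>"
  shows "\<exists>D<\<alpha>. (Sh a \<alpha> f has_real_derivative D) (at y)"
proof -
  obtain E where E: "1 \<le> E" "(shift has_real_derivative E) (at (\<tau> y))"
    using shift_has_derivative_ge_1 tau_less_xplus[OF assms] by blast
  have "continuous_on {..<xp} shift"
    using shift_has_derivative_ge_1 by (meson DERIV_isCont continuous_at_imp_continuous_on lessThan_iff)
  then have tau_deriv: "(\<tau> has_real_derivative inverse E) (at y)"
    using has_real_derivative_inverse_strong[of "{..<xp}" "\<tau> y" shift \<tau> E] E tau[OF assms] tau_shift
    by auto
  have "((\<lambda>z. \<alpha> * z + F (\<tau> z)) has_real_derivative \<alpha> + (deriv f (\<tau> y) - \<alpha>) * inverse E) (at y)"
    using DERIV_add[OF DERIV_cmult[OF DERIV_ident] DERIV_chain2[OF F_has_derivative tau_deriv]] by simp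
  then have "(Sh a \<alpha> f has_real_derivative \<alpha> + (deriv f (\<tau> y) - \<alpha>) * inverse E) (at y)"
    by (rule has_field_derivative_transform_within_open[of _ _ _ "{..<salpha a f \<alpha>}"])
       (use assms in \<open>auto simp: Sh_def\<close>)
  moreover have "(deriv f (\<tau> y) - \<alpha>) * inverse E < 0"
    using deriv_less_alpha[OF tau_less_xplus[OF assms]] E(1) by (simp add: mult_neg_pos)
  ultimately show ?thesis by (intro exI[of _ "\<alpha> + (deriv f (\<tau> y) - \<alpha>) * inverse E"]) auto
qed

end

theorem lemma3p20:
  fixes a \<alpha> :: real and f :: "real \<Rightarrow> real"
  assumes "a > 0" and "0 \<le> \<alpha>" and "\<alpha> < 1" and "f \<in> Ca a"
  shows "\<forall>x < salpha a f \<alpha>. Sh a \<alpha> f differentiable (at x) \<and> deriv (Sh a \<alpha> f) x < \<alpha>"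
proof (intro allI impI)
  interpret Ca_tilt a f \<alpha> using assms by unfold_locales
  fix x assume "x < salpha a f \<alpha>"
  then obtain D where "D < \<alpha>" "(Sh a \<alpha> f has_real_derivative D) (at x)"
    using Sh_has_derivative_less_alpha by blast
  then show "Sh a \<alpha> f differentiable (at x) \<and> deriv (Sh a \<alpha> f) x < \<alpha>"
    using DERIV_imp_deriv real_differentiable_def by metis
qed

end
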